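(* Let $r\ge1$, $\alpha\ge1$, and let $Y_1,\dots,Y_k$ be i.i.d. nonnegative random variables with $\|Y_1\|_{2r}\le\alpha\|Y_1\|_r$. If $k\ge 4\alpha^{2r}$, then \[ \mathbb{E}\Bigl(\sum_{i=1}^k Y_i^r\Bigr)^{1/r}\ge\frac{1}{128\alpha^2}\,k^{1/r}\|Y_1\|_r . \]
   Context: $\|Y\|_\rho=(\mathbb{E}|Y|^\rho)^{1/\rho}$. *)

theory Defs
  imports "HOL-Probability.Probability"
begin

definition Lnorm :: "'a measure \<Rightarrow> real \<Rightarrow> ('a \<Rightarrow> real) \<Rightarrow> real" where
  "Lnorm M \<rho> Y = (\<integral>x. \<bar>Y x\<bar> powr \<rho> \<partial>M) powr (1 / \<rho>)"

end

theory Submission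
  imports Defs
begin

text \<open>Write S = Y_1^r + ... + Y_k^r and a = E S = k ||Y_1||_r^r. The elementary bound
  u^(1/r) \<ge> u - u^2/4 for u \<ge> 0, applied to u = S/a and integrated, gives
  E S^(1/r) \<ge> a^(1/r) (1 - E S^2 / (4 a^2)). By independence
  E S^2 \<le> a^2 + k ||Y_1||_2r^(2r) \<le> a^2 (1 + \<alpha>^(2r) / k) \<le> 5 a^2 / 4, hence
  E S^(1/r) \<ge> 11/16 k^(1/r) ||Y_1||_r, which is stronger than the claim.\<close>

lemma powr_inverse_ge_quadratic_minorant:
  fixes u r :: real
  assumes "0 \<le> u" "1 \<le> r"
  shows "u - u\<^sup>2 / 4 \<le> u powr (1 / r)"
proof (cases "u \<le> 1")
  case True
  have "u powr 1 \<le> u powr (1 / r)"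
    using assms True by (intro powr_mono') auto
  moreover have "u powr 1 = u"
    using assms by (cases "u = 0") auto
  moreover have "0 \<le> u\<^sup>2 / 4" by simp
  ultimately show ?thesis by linarith
next
  case False
  have "1 \<le> u powr (1 / r)"
    using False assms by (intro ge_one_powr_ge_zero) auto
  moreover have "u - u\<^sup>2 / 4 \<le> 1"
    using sum_squares_ge_zero[of "u - 2" 0] by (simp add: power2_eq_square algebra_simps)
  ultimately show ?thesis by linarith
qed

lemma powr_inverse_ge_scaled_quadratic_minorant:
  fixes s r a :: real
  assumes "0 \<le> s" "1 \<le> r" "0 < a"
  shows "a powr (1 / r) * (s / a - s\<^sup>2 / (4 * a\<^sup>2)) \<le> s powr (1 / r)"
proof -
  have "s / a - s\<^sup>2 / (4 * a\<^sup>2) \<le> (s / a) powr (1 / r)"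
    using powr_inverse_ge_quadratic_minorant[of "s / a" r] assms by (simp add: power_divide)
  then have "a powr (1 / r) * (s / a - s\<^sup>2 / (4 * a\<^sup>2)) \<le> a powr (1 / r) * (s / a) powr (1 / r)"
    by (intro mult_left_mono) auto
  also have "\<dots> = s powr (1 / r)"
    using assms by (simp add: powr_mult[symmetric])
  finally show ?thesis .
qed

lemma powr_inverse_le_one_plus:
  fixes s r :: real
  assumes "0 \<le> s" "1 \<le> r"
  shows "s powr (1 / r) \<le> 1 + s"
proof (cases "s \<le> 1")
  case True
  then have "s powr (1 / r) \<le> 1 powr (1 / r)"
    using assms by (intro powr_mono2) auto
  then show ?thesis using assms by simp
next
  case False
  then have "s powr (1 / r) \<le> s powr 1"
    using assms by (intro powr_mono) auto
  then show ?thesis using False by simp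
qed

lemma abs_powr_le_one_plus_abs_powr:
  fixes y p q :: real
  assumes "0 \<le> p" "p \<le> q"
  shows "\<bar>y\<bar> powr p \<le> 1 + \<bar>y\<bar> powr q"
proof (cases "\<bar>y\<bar> \<le> 1")
  case True
  then have "\<bar>y\<bar> powr p \<le> 1 powr p"
    using assms by (intro powr_mono2) auto
  moreover have "0 \<le> \<bar>y\<bar> powr q" by simp
  ultimately show ?thesis by (simp only: powr_one_eq_one)
next
  case False
  then have "\<bar>y\<bar> powr p \<le> \<bar>y\<bar> powr q"
    using assms by (intro powr_mono) auto
  then show ?thesis by simp
qed

lemma (in finite_measure) integrable_abs_powr_mono:
  fixes f :: "'a \<Rightarrow> real"
  assumes [measurable]: "f \<in> borel_measurable M"
    and "0 \<le> p" "p \<le> q"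
    and "integrable M (\<lambda>x. \<bar>f x\<bar> powr q)"
  shows "integrable M (\<lambda>x. \<bar>f x\<bar> powr p)"
proof (rule Bochner_Integration.integrable_bound)
  show "integrable M (\<lambda>x. 1 + \<bar>f x\<bar> powr q)"
    using assms(4) by simp
  show "AE x in M. norm (\<bar>f x\<bar> powr p) \<le> norm (1 + \<bar>f x\<bar> powr q)"
    using abs_powr_le_one_plus_abs_powr[OF assms(2,3)] by (intro AE_I2) auto
qed measurable

lemma abs_powr_moment_eq_if_distr_eq:
  fixes X X' :: "'a \<Rightarrow> real"
  assumes "X \<in> borel_measurable M" "X' \<in> borel_measurable M"
    and "distr M borel X = distr M borel X'"
  shows "integrable M (\<lambda>x. \<bar>X x\<bar> powr p) \<longleftrightarrow> integrable M (\<lambda>x. \<bar>X' x\<bar> powr p)"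
    and "(\<integral>x. \<bar>X x\<bar> powr p \<partial>M) = (\<integral>x. \<bar>X' x\<bar> powr p \<partial>M)"
proof -
  have g: "(\<lambda>y. \<bar>y\<bar> powr p) \<in> borel_measurable borel"
    by measurable
  show "integrable M (\<lambda>x. \<bar>X x\<bar> powr p) \<longleftrightarrow> integrable M (\<lambda>x. \<bar>X' x\<bar> powr p)"
    using integrable_distr_eq[OF assms(1) g] integrable_distr_eq[OF assms(2) g] assms(3) by simp
  show "(\<integral>x. \<bar>X x\<bar> powr p \<partial>M) = (\<integral>x. \<bar>X' x\<bar> powr p \<partial>M)"
    using integral_distr[OF assms(1) g] integral_distr[OF assms(2) g] assms(3) by simp
qed

lemma power2_abs_powr: "(\<bar>y\<bar> powr r)\<^sup>2 = \<bar>y\<bar> powr (2 * r)"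
  for y r :: real
  by (simp add: power2_eq_square powr_add[symmetric])

lemma moment_le_if_Lnorm_le:
  fixes Y :: "'a \<Rightarrow> real"
  assumes "0 < r" "0 \<le> \<alpha>"
    and "Lnorm M (2 * r) Y \<le> \<alpha> * Lnorm M r Y"
  shows "(\<integral>x. \<bar>Y x\<bar> powr (2 * r) \<partial>M) \<le> \<alpha> powr (2 * r) * (\<integral>x. \<bar>Y x\<bar> powr r \<partial>M)\<^sup>2"
proof -
  define m where "m = (\<integral>x. \<bar>Y x\<bar> powr r \<partial>M)"
  define q where "q = (\<integral>x. \<bar>Y x\<bar> powr (2 * r) \<partial>M)"
  have "m \<ge> 0" "q \<ge> 0"
    unfolding m_def q_def by (intro Bochner_Integration.integral_nonneg; simp)+
  have "q = (q powr (1 / (2 * r))) powr (2 * r)"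
    using \<open>0 < r\<close> \<open>q \<ge> 0\<close> by (simp add: powr_powr)
  also have "\<dots> \<le> (\<alpha> * m powr (1 / r)) powr (2 * r)"
    using assms by (intro powr_mono2) (auto simp: Lnorm_def m_def q_def)
  also have "\<dots> = \<alpha> powr (2 * r) * m powr 2"
    using assms \<open>m \<ge> 0\<close> by (simp add: powr_mult powr_powr)
  finally show ?thesis
    using \<open>m \<ge> 0\<close> by (simp add: m_def q_def)
qed

lemma (in finite_measure) integral_powr_inverse_ge:
  fixes S :: "'a \<Rightarrow> real"
  assumes "1 \<le> r"
    and nonneg: "\<And>x. x \<in> space M \<Longrightarrow> 0 \<le> S x"
    and int: "integrable M S" and int2: "integrable M (\<lambda>x. (S x)\<^sup>2)"
    and pos: "0 < (\<integral>x. S x \<partial>M)"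
    and second: "(\<integral>x. (S x)\<^sup>2 \<partial>M) \<le> c * (\<integral>x. S x \<partial>M)\<^sup>2"
  shows "(1 - c / 4) * (\<integral>x. S x \<partial>M) powr (1 / r) \<le> (\<integral>x. S x powr (1 / r) \<partial>M)"
proof -
  define a where "a = (\<integral>x. S x \<partial>M)"
  have [measurable]: "S \<in> borel_measurable M"
    using int by auto
  have int_root: "integrable M (\<lambda>x. S x powr (1 / r))"
  proof (rule Bochner_Integration.integrable_bound)
    show "integrable M (\<lambda>x. 1 + S x)"
      using int by simp
    show "AE x in M. norm (S x powr (1 / r)) \<le> norm (1 + S x)"
      using nonneg powr_inverse_le_one_plus[OF _ \<open>1 \<le> r\<close>] by (intro AE_I2) auto
  qed measurable
  have "1 - c / 4 \<le> 1 - (\<integral>x. (S x)\<^sup>2 \<partial>M) / (4 * a\<^sup>2)"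
    using second pos by (simp add: a_def divide_le_eq)
  then have "(1 - c / 4) * a powr (1 / r) \<le> a powr (1 / r) * (1 - (\<integral>x. (S x)\<^sup>2 \<partial>M) / (4 * a\<^sup>2))"
    by (subst mult.commute) (rule mult_left_mono, simp_all)
  also have "\<dots> = (\<integral>x. a powr (1 / r) * (S x / a - (S x)\<^sup>2 / (4 * a\<^sup>2)) \<partial>M)"
    using int int2 pos by (simp add: a_def)
  also have "\<dots> \<le> (\<integral>x. S x powr (1 / r) \<partial>M)"
    using int int2 int_root nonneg pos
    by (intro Bochner_Integration.integral_mono)
      (auto intro: powr_inverse_ge_scaled_quadratic_minorant[OF _ \<open>1 \<le> r\<close>] simp: a_def)
  finally show ?thesis
    by (simp add: a_def)
qed

lemma (in prob_space) indep_vars_integral_mult: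
  fixes Z :: "'i \<Rightarrow> 'a \<Rightarrow> real"
  assumes indep: "indep_vars (\<lambda>_. borel) Z I"
    and "i \<in> I" "j \<in> I" "i \<noteq> j"
    and "integrable M (Z i)" "integrable M (Z j)"
  shows "integrable M (\<lambda>x. Z i x * Z j x)"
    and "(\<integral>x. Z i x * Z j x \<partial>M) = (\<integral>x. Z i x \<partial>M) * (\<integral>x. Z j x \<partial>M)"
proof -
  have indep2: "indep_vars (\<lambda>_. borel) Z {i, j}"
    using assms by (intro indep_vars_subset[OF indep]) auto
  have ints: "\<And>l. l \<in> {i, j} \<Longrightarrow> integrable M (Z l)"
    using assms by auto
  show "integrable M (\<lambda>x. Z i x * Z j x)"
    using indep_vars_integrable[OF _ indep2 ints] assms by simp
  show "(\<integral>x. Z i x * Z j x \<partial>M) = (\<integral>x. Z i x \<partial>M) * (\<integral>x. Z j x \<partial>M)"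
    using indep_vars_lebesgue_integral[OF _ indep2 ints] assms by simp
qed

lemma (in prob_space) integral_square_sum_indep:
  fixes Z :: "'i \<Rightarrow> 'a \<Rightarrow> real"
  assumes "finite I"
    and indep: "indep_vars (\<lambda>_. borel) Z I"
    and int: "\<And>i. i \<in> I \<Longrightarrow> integrable M (Z i)"
    and int2: "\<And>i. i \<in> I \<Longrightarrow> integrable M (\<lambda>x. (Z i x)\<^sup>2)"
    and mean: "\<And>i. i \<in> I \<Longrightarrow> (\<integral>x. Z i x \<partial>M) = m"
    and second: "\<And>i. i \<in> I \<Longrightarrow> (\<integral>x. (Z i x)\<^sup>2 \<partial>M) = q"
  shows "integrable M (\<lambda>x. (\<Sum>i\<in>I. Z i x)\<^sup>2)"
    and "(\<integral>x. (\<Sum>i\<in>I. Z i x)\<^sup>2 \<partial>M) = (real (card I))\<^sup>2 * m\<^sup>2 + real (card I) * (q - m\<^sup>2)"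
proof -
  have square: "\<And>x. (\<Sum>i\<in>I. Z i x)\<^sup>2 = (\<Sum>i\<in>I. \<Sum>j\<in>I. Z i x * Z j x)"
    by (simp add: power2_eq_square sum_product)
  have pair: "integrable M (\<lambda>x. Z i x * Z j x)"
    "(\<integral>x. Z i x * Z j x \<partial>M) = m\<^sup>2 + (if i = j then q - m\<^sup>2 else 0)"
    if "i \<in> I" "j \<in> I" for i j
    using that int2 second indep_vars_integral_mult[OF indep that _ int int] mean
    by (cases "i = j"; simp add: power2_eq_square)+
  show "integrable M (\<lambda>x. (\<Sum>i\<in>I. Z i x)\<^sup>2)"
    unfolding square using pair by (intro Bochner_Integration.integrable_sum) auto
  have "(\<integral>x. (\<Sum>i\<in>I. Z i x)\<^sup>2 \<partial>M) = (\<Sum>i\<in>I. \<Sum>j\<in>I. \<integral>x. Z i x * Z j x \<partial>M)"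
    unfolding square using pair
    by (simp add: Bochner_Integration.integral_sum Bochner_Integration.integrable_sum)
  also have "\<dots> = (\<Sum>i\<in>I. \<Sum>j\<in>I. m\<^sup>2 + (if i = j then q - m\<^sup>2 else 0))"
    using pair by (intro sum.cong) auto
  also have "\<dots> = (real (card I))\<^sup>2 * m\<^sup>2 + real (card I) * (q - m\<^sup>2)"
    using \<open>finite I\<close> by (simp add: sum.distrib power2_eq_square algebra_simps)
  finally show "(\<integral>x. (\<Sum>i\<in>I. Z i x)\<^sup>2 \<partial>M) = (real (card I))\<^sup>2 * m\<^sup>2 + real (card I) * (q - m\<^sup>2)" .
qed

lemma (in prob_space) integral_root_sum_indep_ge:
  fixes Z :: "'i \<Rightarrow> 'a \<Rightarrow> real"
  assumes "finite I" "1 \<le> r"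
    and indep: "indep_vars (\<lambda>_. borel) Z I"
    and nonneg: "\<And>i x. i \<in> I \<Longrightarrow> x \<in> space M \<Longrightarrow> 0 \<le> Z i x"
    and int: "\<And>i. i \<in> I \<Longrightarrow> integrable M (Z i)"
    and int2: "\<And>i. i \<in> I \<Longrightarrow> integrable M (\<lambda>x. (Z i x)\<^sup>2)"
    and mean: "\<And>i. i \<in> I \<Longrightarrow> (\<integral>x. Z i x \<partial>M) = m"
    and second: "\<And>i. i \<in> I \<Longrightarrow> (\<integral>x. (Z i x)\<^sup>2 \<partial>M) = q"
    and small: "4 * q \<le> real (card I) * m\<^sup>2"
  shows "11 / 16 * (real (card I) * m) powr (1 / r) \<le> (\<integral>x. (\<Sum>i\<in>I. Z i x) powr (1 / r) \<partial>M)"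
proof -
  define n where "n = real (card I)"
  define S where "S = (\<lambda>x. \<Sum>i\<in>I. Z i x)"
  have S_nonneg: "0 \<le> S x" if "x \<in> space M" for x
    using nonneg that by (simp add: S_def sum_nonneg)
  have S_int: "integrable M S" and S_eq: "(\<integral>x. S x \<partial>M) = n * m"
    using int mean by (simp_all add: S_def n_def Bochner_Integration.integral_sum)
  have S2_int: "integrable M (\<lambda>x. (S x)\<^sup>2)"
    and S2_eq: "(\<integral>x. (S x)\<^sup>2 \<partial>M) = n\<^sup>2 * m\<^sup>2 + n * (q - m\<^sup>2)"
    using integral_square_sum_indep[OF \<open>finite I\<close> indep int int2 mean second]
    by (simp_all add: S_def n_def)
  have "0 \<le> (\<integral>x. S x powr (1 / r) \<partial>M)"
    by (intro Bochner_Integration.integral_nonneg) simp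
  moreover have "11 / 16 * (n * m) powr (1 / r) \<le> (\<integral>x. S x powr (1 / r) \<partial>M)" if "n * m \<noteq> 0"
  proof -
    have "I \<noteq> {}"
      using that by (auto simp: n_def)
    then obtain i where "i \<in> I"
      by blast
    then have "0 \<le> m"
      using mean[of i] nonneg by (metis Bochner_Integration.integral_nonneg)
    then have "0 < n * m"
      using that by (simp add: n_def order_le_neq_trans)
    have "q - m\<^sup>2 \<le> n / 4 * m\<^sup>2"
      using small zero_le_power2[of m] unfolding n_def by linarith
    then have "n * (q - m\<^sup>2) \<le> n * (n / 4 * m\<^sup>2)"
      by (rule mult_left_mono) (simp add: n_def)
    then have "(\<integral>x. (S x)\<^sup>2 \<partial>M) \<le> n\<^sup>2 * m\<^sup>2 + n * (n / 4 * m\<^sup>2)"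
      unfolding S2_eq by linarith
    also have "\<dots> = 5 / 4 * (\<integral>x. S x \<partial>M)\<^sup>2"
      by (simp add: S_eq power2_eq_square field_simps)
    finally show ?thesis
      using integral_powr_inverse_ge[OF \<open>1 \<le> r\<close> S_nonneg S_int S2_int, where c = "5 / 4"]
        \<open>0 < n * m\<close>
      by (simp add: S_eq)
  qed
  ultimately show ?thesis
    by (cases "n * m = 0") (auto simp: S_def n_def)
qed

theorem mainTheorem12:
  fixes M :: "'a measure" and Y :: "nat \<Rightarrow> 'a \<Rightarrow> real"
    and r \<alpha> :: real and k :: nat
  assumes "prob_space M"
    and "r \<ge> 1" and "\<alpha> \<ge> 1"
    and meas: "\<And>i. i < k \<Longrightarrow> Y i \<in> borel_measurable M"
    and indep: "prob_space.indep_vars M (\<lambda>_. borel) Y {..<k}"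
    and ident: "\<And>i. i < k \<Longrightarrow> distr M borel (Y i) = distr M borel (Y 0)"
    and nonneg: "\<And>i x. i < k \<Longrightarrow> x \<in> space M \<Longrightarrow> Y i x \<ge> 0"
    and moment: "integrable M (\<lambda>x. \<bar>Y 0 x\<bar> powr (2 * r))"
    and hyp: "Lnorm M (2 * r) (Y 0) \<le> \<alpha> * Lnorm M r (Y 0)"
    and kbig: "real k \<ge> 4 * \<alpha> powr (2 * r)"
  shows "(\<integral>x. (\<Sum>i<k. Y i x powr r) powr (1 / r) \<partial>M)
           \<ge> 1 / (128 * \<alpha>\<^sup>2) * real k powr (1 / r) * Lnorm M r (Y 0)"
proof -
  interpret prob_space M by fact
  have "1 \<le> \<alpha> powr (2 * r)"
    using assms(2,3) by (intro ge_one_powr_ge_zero) auto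
  then have "0 < k"
    using kbig by simp
  define Z where "Z i = (\<lambda>x. \<bar>Y i x\<bar> powr r)" for i
  define m where "m = (\<integral>x. \<bar>Y 0 x\<bar> powr r \<partial>M)"
  define q where "q = (\<integral>x. \<bar>Y 0 x\<bar> powr (2 * r) \<partial>M)"
  have Z_indep: "indep_vars (\<lambda>_. borel) Z {..<k}"
    unfolding Z_def by (rule indep_vars_compose2[OF indep]) measurable
  have "integrable M (\<lambda>x. \<bar>Y 0 x\<bar> powr r)"
    by (rule integrable_abs_powr_mono[OF meas[OF \<open>0 < k\<close>] _ _ moment]) (use assms(2) in auto)
  then have moments: "integrable M (Z i)" "(\<integral>x. Z i x \<partial>M) = m"
    "integrable M (\<lambda>x. (Z i x)\<^sup>2)" "(\<integral>x. (Z i x)\<^sup>2 \<partial>M) = q" if "i < k" for i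
    using abs_powr_moment_eq_if_distr_eq[OF meas[OF that] meas[OF \<open>0 < k\<close>] ident[OF that]] moment
    by (simp_all add: Z_def m_def q_def power2_abs_powr)
  have "4 * q \<le> 4 * \<alpha> powr (2 * r) * m\<^sup>2"
    using moment_le_if_Lnorm_le[OF _ _ hyp] assms(2,3) by (simp add: m_def q_def)
  also have "\<dots> \<le> real k * m\<^sup>2"
    using kbig by (intro mult_right_mono) auto
  finally have small: "4 * q \<le> real k * m\<^sup>2" .
  have "1 / (128 * \<alpha>\<^sup>2) * real k powr (1 / r) * Lnorm M r (Y 0)
      = 1 / (128 * \<alpha>\<^sup>2) * (real k * m) powr (1 / r)"
    by (simp add: Lnorm_def m_def powr_mult)
  also have "\<dots> \<le> 11 / 16 * (real k * m) powr (1 / r)"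
    using one_le_power[OF assms(3), of 2] by (intro mult_right_mono) (simp_all add: divide_le_eq)
  also have "\<dots> \<le> (\<integral>x. (\<Sum>i<k. Z i x) powr (1 / r) \<partial>M)"
    using integral_root_sum_indep_ge[OF _ assms(2) Z_indep, of m q] moments small
    by (simp add: Z_def)
  also have "\<dots> = (\<integral>x. (\<Sum>i<k. Y i x powr r) powr (1 / r) \<partial>M)"
    by (intro Bochner_Integration.integral_cong refl arg_cong[where f = "\<lambda>t. t powr (1 / r)"] sum.cong)
      (simp_all add: Z_def nonneg)
  finally show ?thesis .
qed

end
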